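(* Let $d_0<d_1<\cdots$ be the increasing enumeration of $\{m\ge1:\ c_m=0\}$ and $z_n=\left(\frac{d_{4n}+1}{4}-n\right)\bmod 2$ for $n\ge0$. Then the sequence $(z_n)_{n\ge0}$ is not $2$-automatic.
   Context: For $n\in\mathbb{N}$ let $s_2(n)$ be the sum of the binary digits of $n$ and $t_n=s_2(n)\bmod 2$ (the Prouhet–Thue–Morse sequence). Let $F(X)=\sum_{n\ge1}t_nX^n\in\mathbb{F}_2[[X]]$ and let $G(X)=\sum_{n\ge1}c_nX^n\in\mathbb{F}_2[[X]]$ be its compositional inverse, i.e. $F(G(X))=G(F(X))=X$. The $c_n$ are identified with integers in $\{0,1\}$. The sequence $(d_n)$ is indexed from $0$, so $d_0=3$. A sequence $(u_n)$ is $k$-automatic if $u_n$ is the output of a deterministic finite automaton with output reading the base-$k$ expansion of $n$; equivalently its $k$-kernel $\{(u_{k^an+b})_{n}:\ a\ge0,\ 0\le b<k^a\}$ is finite. *)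

theory Defs
  imports "HOL-Computational_Algebra.Formal_Power_Series" "HOL-Library.Z2" "HOL-Library.Infinite_Set"
begin

fun s2 :: "nat \<Rightarrow> nat" where
  "s2 n = (if n = 0 then 0 else n mod 2 + s2 (n div 2))"

definition thue_morse :: "nat \<Rightarrow> bit" where
  "thue_morse n = of_nat (s2 n mod 2)"

definition tmF :: "bit fps" where
  "tmF = Abs_fps (\<lambda>n. if n = 0 then 0 else thue_morse n)"

definition tmG :: "bit fps" where
  "tmG = fps_inv tmF"

definition cseq :: "nat \<Rightarrow> bit" where
  "cseq n = fps_nth tmG n"

definition dseq :: "nat \<Rightarrow> nat" where
  "dseq n = enumerate {m. m \<ge> 1 \<and> cseq m = 0} n"

text \<open>z_n = ((d_{4n}+1)/4 - n) mod 2 (the quotient is an integer).\<close>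
definition zseq :: "nat \<Rightarrow> int" where
  "zseq n = ((int (dseq (4*n)) + 1) div 4 - int n) mod 2"

definition kernel :: "nat \<Rightarrow> (nat \<Rightarrow> 'a) \<Rightarrow> (nat \<Rightarrow> 'a) set" where
  "kernel k u = {(\<lambda>n. u (k ^ a * n + b)) | a b. b < k ^ a}"

definition automatic :: "nat \<Rightarrow> (nat \<Rightarrow> 'a) \<Rightarrow> bool" where
  "automatic k u \<longleftrightarrow> finite (kernel k u)"

end

theory Submission
  imports Defs "HOL-Library.Disjoint_Sets"
begin

text \<open>
  Over F_2 the Thue--Morse series satisfies (1 + X)^2 F = (1 + X)^3 F^2 + X, since
  t(2m) = t(m) and t(2m+1) = 1 + t(m). Let S be the set of Moser--de Bruijn numbers (base-4
  digits in {0, 1}) and H = sum of X^(8s) over s in S. The digit structure of S gives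
  H = (1 + X)^8 H^4, i.e. H^3 (1 + X)^8 = 1, and the series G defined by X G = H (1 + X)^3 + 1 + X
  then satisfies the functional equation of F with the roles of X and F exchanged. Hence
  F(G) = X, and c(n) = 1 iff n >= 1 and n + 1 = 8s + r with s in S and r < 4.

  So the zeros of c come in blocks 4k - 1, ..., 4k + 2, one for each k not of the form 2s with
  s in S, and d(4n) = 4 k(n) - 1 for the n-th such k(n). Then z(n) is the parity of the number
  of elements 2s < k(n), which is odd exactly when n = 8 s(i) - 2i for the i-th element s(i)
  of S. These positions are so sparse that the kernel sequences n |-> z(2^(2p+1) n) are
  pairwise distinct: they are told apart at n = 4^(p+1) - 1.
\<close>

section \<open>Power series over the two-element field\<close>

lemma bit_fps_two_eq_0 [simp]: "(2 :: bit fps) = 0"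
  by (simp add: fps_eq_iff fps_numeral_nth)

lemma bit_fps_square_add: "(f + g)^2 = f^2 + (g^2 :: bit fps)"
  by (simp add: power2_sum)

lemma bit_fps_square_nth:
  fixes f :: "bit fps"
  shows "fps_nth (f^2) n = (if even n then fps_nth f (n div 2) else 0)"
proof -
  let ?t = "\<lambda>i. fps_nth f i * fps_nth f (n - i)"
  let ?off = "{0..n} - {i. 2 * i = n}"
  have off_diagonal: "(\<Sum>i\<in>?off. ?t i) = 0"
    by (rule sum_involution_eq_0[where h = "\<lambda>i. n - i"]) (auto simp: mult.commute)
  have "fps_nth (f^2) n = (\<Sum>i=0..n. ?t i)"
    by (simp add: power2_eq_square fps_mult_nth)
  also have "\<dots> = (\<Sum>i\<in>{0..n} \<inter> {i. 2 * i = n}. ?t i) + (\<Sum>i\<in>?off. ?t i)"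
    by (rule sum.Int_Diff) simp
  also have "{0..n} \<inter> {i. 2 * i = n} = (if even n then {n div 2} else {})"
    by auto
  finally show ?thesis
    using off_diagonal by (cases "fps_nth f (n div 2)") (auto simp: mult_2 [symmetric])
qed

lemma bit_fps_one_plus_X_cube: "(1 + fps_X) ^ 3 = (\<Sum>k<4. fps_X ^ k :: bit fps)"
proof -
  have "(1 + fps_X :: bit fps) ^ 3 = (1 + fps_X) ^ 2 * (1 + fps_X)"
    by (simp add: power_numeral_reduce)
  then show ?thesis
    by (simp add: bit_fps_square_add numeral_eq_Suc algebra_simps)
qed

lemma bit_fps_one_plus_X_power_8: "(1 + fps_X) ^ 8 = 1 + (fps_X ^ 8 :: bit fps)"
proof -
  have "(1 + fps_X) ^ 8 = (((1 + fps_X :: bit fps) ^ 2) ^ 2) ^ 2"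
    by (simp flip: power_mult)
  then show ?thesis
    by (simp add: bit_fps_square_add flip: power_mult)
qed

definition indicator_fps :: "nat set \<Rightarrow> bit fps" where
  "indicator_fps A = Abs_fps (\<lambda>n. of_bool (n \<in> A))"

lemma indicator_fps_nth [simp]: "fps_nth (indicator_fps A) n = of_bool (n \<in> A)"
  by (simp add: indicator_fps_def)

lemma indicator_fps_add:
  "indicator_fps A + indicator_fps B = indicator_fps ((A - B) \<union> (B - A))"
  by (simp add: fps_eq_iff of_bool_def)

lemma indicator_fps_add_disjoint:
  "A \<inter> B = {} \<Longrightarrow> indicator_fps A + indicator_fps B = indicator_fps (A \<union> B)"
  by (simp add: indicator_fps_add Diff_triv Int_commute)

lemma indicator_fps_square: "(indicator_fps A)^2 = indicator_fps ((*) 2 ` A)"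
  by (auto simp: fps_eq_iff bit_fps_square_nth elim!: evenE)

lemma fps_X_power_mult_indicator_fps:
  "fps_X ^ k * indicator_fps A = indicator_fps ((+) k ` A)"
  by (auto simp: fps_eq_iff fps_X_power_mult_nth image_iff intro: exI[of _ "_ - k"])

lemma indicator_fps_singleton: "indicator_fps {k} = fps_X ^ k"
  by (simp add: fps_eq_iff fps_X_power_nth)

lemma indicator_fps_mult_sum_X_powers:
  assumes "r \<le> m"
  shows "indicator_fps ((*) m ` A) * (\<Sum>k<r. fps_X ^ k) =
    indicator_fps {x. x mod m < r \<and> x div m \<in> A}"
  using assms
proof (induction r)
  case 0
  then show ?case
    by (simp add: fps_eq_iff)
next
  case (Suc r)
  have "(+) r ` (*) m ` A = {x. x mod m = r \<and> x div m \<in> A}"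
    using Suc.prems
    by (auto simp: image_iff intro!: exI [of _ "_ div m"]) (metis div_mult_mod_eq add.commute mult.commute)
  then have "indicator_fps ((*) m ` A) * (\<Sum>k<Suc r. fps_X ^ k) =
      indicator_fps {x. x mod m < r \<and> x div m \<in> A} +
      indicator_fps {x. x mod m = r \<and> x div m \<in> A}"
    using Suc by (simp add: distrib_left mult.commute fps_X_power_mult_indicator_fps)
  also have "\<dots> =
      indicator_fps ({x. x mod m < r \<and> x div m \<in> A} \<union> {x. x mod m = r \<and> x div m \<in> A})"
    by (rule indicator_fps_add_disjoint) auto
  also have "{x. x mod m < r \<and> x div m \<in> A} \<union> {x. x mod m = r \<and> x div m \<in> A} =
      {x. x mod m < Suc r \<and> x div m \<in> A}"
    by auto
  finally show ?case .
qed

lemma fps_inv_unique: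
  fixes a b :: "'a :: field fps"
  assumes "fps_nth a 0 = 0" "fps_nth a 1 \<noteq> 0" "fps_nth b 0 = 0" and "a oo b = fps_X"
  shows "fps_inv a = b"
proof -
  have "fps_inv a = fps_inv a oo (a oo b)"
    by (simp add: assms(4))
  also have "\<dots> = (fps_inv a oo a) oo b"
    using assms(3,1) by (rule fps_compose_assoc)
  finally show ?thesis
    using assms by (simp add: fps_inv)
qed

lemma char_2_cubic:
  fixes X G H :: "'a :: idom"
  assumes char_2: "(2 :: 'a) = 0" and "X \<noteq> 0"
    and G: "X * G = H * (1 + X) ^ 3 + (1 + X)" and H: "H ^ 3 * (1 + X) ^ 8 = 1"
  shows "X * (1 + G) ^ 2 = (1 + G) ^ 3 * X ^ 2 + G"
proof -
  define u b where "u = 1 + X" and "b = H * u ^ 2"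
  have double: "y + y = 0" for y :: 'a
    by (metis char_2 mult_2 mult_zero_left)
  have V: "X * (1 + G) = 1 + u * b + 2 * X"
    using G by (simp add: u_def b_def algebra_simps power_numeral_reduce)
  have ub: "u ^ 2 * b ^ 3 = 1"
    using H by (simp add: u_def b_def algebra_simps power_numeral_reduce)
  have "X ^ 3 * (X * (1 + G) ^ 2 + (1 + G) ^ 3 * X ^ 2 + G) =
      X ^ 2 * ((X * (1 + G)) ^ 2 + (X * (1 + G)) ^ 3 + X * G)"
    by algebra
  also have "\<dots> = X ^ 2 * ((1 + u * b) ^ 2 + (1 + u * b) ^ 3 + u * b + u)"
    unfolding V G using char_2 by (simp add: u_def b_def algebra_simps power_numeral_reduce)
  also have "\<dots> = X ^ 2 * (u * (u ^ 2 * b ^ 3 + 1) + 2 * (1 + 3 * u * b + 2 * u ^ 2 * b ^ 2))"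
    by algebra
  also have "\<dots> = 0"
    using ub char_2 double by simp
  finally have "X * (1 + G) ^ 2 + ((1 + G) ^ 3 * X ^ 2 + G) = 0"
    using \<open>X \<noteq> 0\<close> by (simp add: add.assoc)
  then show ?thesis
    by (metis add_right_cancel double)
qed

section \<open>Enumerations of sets of naturals\<close>

lemma enumerate_range_strict_mono:
  fixes f :: "nat \<Rightarrow> nat"
  assumes "strict_mono f"
  shows "enumerate (range f) n = f n"
proof -
  have first: "enumerate (range g) 0 = g 0" if "strict_mono g" for g :: "nat \<Rightarrow> nat"
    using that by (auto simp: enumerate_0 strict_mono_less_eq intro: Least_equality)
  show ?thesis
    using assms
  proof (induction n arbitrary: f)
    case (Suc n)
    have "range f - {f 0} = range (\<lambda>i. f (Suc i))"
      using strict_mono_eq [OF Suc.prems] by (auto simp: image_iff) (metis not0_implies_Suc)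
    moreover have "strict_mono (\<lambda>i. f (Suc i))"
      using Suc.prems by (simp add: strict_mono_def)
    ultimately show ?case
      using Suc.IH first [OF Suc.prems] by (simp add: enumerate_Suc')
  qed (rule first)
qed

lemma card_less_enumerate:
  fixes A :: "nat set"
  assumes "infinite A"
  shows "card {x \<in> A. x < enumerate A n} = n"
proof -
  have "{x \<in> A. x < enumerate A n} = enumerate A ` {..<n}"
  proof (intro equalityI subsetI)
    fix x
    assume x: "x \<in> {x \<in> A. x < enumerate A n}"
    then obtain m where "x = enumerate A m"
      using range_enumerate [OF assms] by blast
    then show "x \<in> enumerate A ` {..<n}"
      using x by (simp add: assms)
  qed (auto simp: assms enumerate_in_set)
  then show ?thesis
    using strict_mono_imp_inj_on [OF strict_mono_enumerate [OF assms]]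
    by (simp add: card_image inj_on_subset)
qed

lemma enumerate_card_less:
  fixes A :: "nat set"
  assumes "infinite A" and "x \<in> A"
  shows "enumerate A (card {y \<in> A. y < x}) = x"
proof -
  obtain m where "x = enumerate A m"
    using assms range_enumerate by blast
  then show ?thesis
    using card_less_enumerate [OF assms(1)] by simp
qed

lemma card_less_add_card_less_notin:
  "card {y \<in> A. y < x} + card {y. y < x \<and> y \<notin> A} = (x :: nat)"
proof -
  have "card ({y \<in> A. y < x} \<union> {y. y < x \<and> y \<notin> A}) =
      card {y \<in> A. y < x} + card {y. y < x \<and> y \<notin> A}"
    by (rule card_Un_disjoint) auto
  moreover have "{y \<in> A. y < x} \<union> {y. y < x \<and> y \<notin> A} = {..<x}"
    by auto
  ultimately show ?thesis
    by simp
qed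

lemma strict_mono_less_eq_lessThan:
  fixes g :: "nat \<Rightarrow> nat"
  assumes "strict_mono g"
  shows "{i. g i < k} = {..<card {i. g i < k}}"
proof -
  define c where "c = (LEAST i. k \<le> g i)"
  have "k \<le> g k"
    using assms by (rule strict_mono_imp_increasing)
  then have "k \<le> g c"
    unfolding c_def by (rule LeastI)
  have "g i < k \<longleftrightarrow> i < c" for i
  proof
    assume "g i < k"
    show "i < c"
    proof (rule ccontr)
      assume "\<not> i < c"
      then have "g c \<le> g i"
        using strict_mono_less_eq [OF assms] by simp
      with \<open>k \<le> g c\<close> \<open>g i < k\<close> show False
        by simp
    qed
  next
    assume "i < c"
    then show "g i < k"
      using not_less_Least [of i "\<lambda>i. k \<le> g i"] unfolding c_def by simp
  qed
  then have "{i. g i < k} = {..<c}"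
    by auto
  then show ?thesis
    by simp
qed

lemma strict_mono_gap_not_in_range:
  fixes f :: "nat \<Rightarrow> nat"
  assumes "strict_mono f" and "f a < x" and "x < f (Suc a)"
  shows "x \<notin> range f"
proof
  assume "x \<in> range f"
  then obtain i where "x = f i"
    by blast
  then have "a < i" and "i < Suc a"
    using assms strict_mono_less by blast+
  then show False
    by simp
qed

section \<open>The Thue--Morse series\<close>

declare s2.simps [simp del]

lemma s2_0: "s2 0 = 0"
  by (subst s2.simps) simp

lemma s2_double: "s2 (2 * m) = s2 m"
  by (subst s2.simps) (simp add: s2_0)

lemma s2_double_plus_1: "s2 (Suc (2 * m)) = Suc (s2 m)"
  by (subst s2.simps) simp

lemma bit_of_nat: "(of_nat k :: bit) = of_bool (odd k)"
  by (induction k) auto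

lemma thue_morse_0 [simp]: "thue_morse 0 = 0"
  by (simp add: thue_morse_def s2_0)

lemma thue_morse_double [simp]: "thue_morse (2 * m) = thue_morse m"
  by (simp add: thue_morse_def s2_double)

lemma thue_morse_double_plus_1 [simp]: "thue_morse (Suc (2 * m)) = 1 + thue_morse m"
  by (simp only: thue_morse_def s2_double_plus_1) (simp add: bit_of_nat)

lemma tmF_nth: "fps_nth tmF n = thue_morse n"
  by (simp add: tmF_def)

text \<open>(1 + X) F^2 has the coefficient t(m) at 2m and at 2m + 1; the last summand accounts for
  t(2m+1) = 1 + t(m).\<close>

lemma tmF_split: "tmF = (1 + fps_X) * tmF^2 + fps_X * indicator_fps {n. even n}"
proof (rule fps_ext)
  fix n
  show "fps_nth tmF n = fps_nth ((1 + fps_X) * tmF^2 + fps_X * indicator_fps {n. even n}) n"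
    by (cases "even n")
       (auto simp: distrib_right fps_X_mult_nth bit_fps_square_nth tmF_nth elim!: evenE oddE)
qed

lemma indicator_fps_evens_inverse: "indicator_fps {n. even n} * (1 + fps_X)^2 = 1"
proof -
  have shifted: "(+) 2 ` {n::nat. even n} = {n. even n \<and> 2 \<le> n}"
    by (auto simp: image_iff) (metis add_2_eq_Suc dvd_diff_nat even_numeral le_add_diff_inverse)
  have "indicator_fps {n. even n} * (1 + fps_X)^2 =
      indicator_fps {n. even n} + fps_X^2 * indicator_fps {n. even n}"
    by (simp add: bit_fps_square_add algebra_simps)
  also have "\<dots> = indicator_fps {0}"
  proof -
    have "({n. even n} - (+) 2 ` {n. even n}) \<union> ((+) 2 ` {n. even n} - {n. even n}) = {0::nat}"
      unfolding shifted by auto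
    then show ?thesis
      by (simp only: fps_X_power_mult_indicator_fps indicator_fps_add)
  qed
  finally show ?thesis
    by (simp add: indicator_fps_singleton)
qed

lemma tmF_functional_equation: "tmF * (1 + fps_X)^2 = (1 + fps_X)^3 * tmF^2 + fps_X"
proof -
  have "tmF * (1 + fps_X)^2 = (1 + fps_X)^3 * tmF^2 + fps_X * (indicator_fps {n. even n} * (1 + fps_X)^2)"
    by (subst tmF_split) (simp add: algebra_simps power_numeral_reduce)
  then show ?thesis
    by (simp add: indicator_fps_evens_inverse)
qed

section \<open>The Moser--de Bruijn sequence\<close>

fun moser_de_bruijn :: "nat \<Rightarrow> nat" where
  "moser_de_bruijn i = (if i = 0 then 0 else 4 * moser_de_bruijn (i div 2) + i mod 2)"

declare moser_de_bruijn.simps [simp del]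

lemma moser_de_bruijn_0 [simp]: "moser_de_bruijn 0 = 0"
  by (subst moser_de_bruijn.simps) simp

lemma moser_de_bruijn_digit:
  assumes "e < 2"
  shows "moser_de_bruijn (2 * j + e) = 4 * moser_de_bruijn j + e"
  using assms by (subst moser_de_bruijn.simps) auto

lemma moser_de_bruijn_double [simp]: "moser_de_bruijn (2 * j) = 4 * moser_de_bruijn j"
  using moser_de_bruijn_digit [of 0 j] by simp

lemma moser_de_bruijn_double_plus_1 [simp]:
  "moser_de_bruijn (Suc (2 * j)) = Suc (4 * moser_de_bruijn j)"
  using moser_de_bruijn_digit [of 1 j] by simp

lemma four_mult_add_in_range_moser_de_bruijn:
  assumes "r < 4"
  shows "4 * q + r \<in> range moser_de_bruijn \<longleftrightarrow> r \<le> 1 \<and> q \<in> range moser_de_bruijn"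
proof
  assume "4 * q + r \<in> range moser_de_bruijn"
  then obtain i where "4 * q + r = moser_de_bruijn i"
    by auto
  also have "\<dots> = 4 * moser_de_bruijn (i div 2) + i mod 2"
    using moser_de_bruijn_digit [of "i mod 2" "i div 2"] by simp
  finally have digits: "4 * q + r = 4 * moser_de_bruijn (i div 2) + i mod 2" .
  have "q = moser_de_bruijn (i div 2)"
    using arg_cong [OF digits, of "\<lambda>x. x div 4"] assms by simp
  moreover have "r = i mod 2"
    using arg_cong [OF digits, of "\<lambda>x. x mod 4"] assms by simp
  ultimately show "r \<le> 1 \<and> q \<in> range moser_de_bruijn"
    by auto
next
  assume "r \<le> 1 \<and> q \<in> range moser_de_bruijn"
  then obtain j where "r < 2" and "q = moser_de_bruijn j"
    by auto
  then have "4 * q + r = moser_de_bruijn (2 * j + r)"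
    by (simp add: moser_de_bruijn_digit)
  then show "4 * q + r \<in> range moser_de_bruijn"
    by (metis rangeI)
qed

lemma moser_de_bruijn_less_Suc: "moser_de_bruijn i < moser_de_bruijn (Suc i)"
proof (induction i rule: less_induct)
  case (less i)
  show ?case
  proof (cases "even i")
    case True
    then show ?thesis
      by (auto elim: evenE)
  next
    case False
    then obtain j where i: "i = Suc (2 * j)"
      by (auto elim: oddE)
    then have "moser_de_bruijn j < moser_de_bruijn (Suc j)"
      using less by simp
    moreover have "moser_de_bruijn (Suc i) = 4 * moser_de_bruijn (Suc j)"
      using moser_de_bruijn_double [of "Suc j"] by (simp add: i)
    ultimately show ?thesis
      using i by simp
  qed
qed

lemma strict_mono_moser_de_bruijn: "strict_mono moser_de_bruijn"
  by (simp add: strict_mono_Suc_iff moser_de_bruijn_less_Suc)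

lemma moser_de_bruijn_power_of_2: "moser_de_bruijn (2 ^ j) = 4 ^ j"
  by (induction j) (simp_all add: moser_de_bruijn_digit [of 1 0, simplified])

lemma moser_de_bruijn_power_of_2_minus_1: "3 * moser_de_bruijn (2 ^ j - 1) + 1 = 4 ^ j"
proof (induction j)
  case (Suc j)
  have "1 \<le> (2::nat) ^ j"
    by simp
  then have "(2::nat) ^ Suc j - 1 = Suc (2 * (2 ^ j - 1))"
    by (simp only: power_Suc)
  then show ?case
    using Suc by simp
qed simp

section \<open>The compositional inverse of the Thue--Morse series\<close>

definition Hseries :: "bit fps" where
  "Hseries = indicator_fps ((*) 8 ` range moser_de_bruijn)"

lemma eight_times_range_moser_de_bruijn:
  "(*) 8 ` range moser_de_bruijn =
    (*) 32 ` range moser_de_bruijn \<union> (\<lambda>q. 32 * q + 8) ` range moser_de_bruijn"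
proof (intro equalityI subsetI)
  fix x
  assume "x \<in> (*) 8 ` range moser_de_bruijn"
  then obtain t where x: "x = 8 * t" and "4 * (t div 4) + t mod 4 \<in> range moser_de_bruijn"
    by auto
  then have "t mod 4 \<le> 1" and q: "t div 4 \<in> range moser_de_bruijn"
    using four_mult_add_in_range_moser_de_bruijn [of "t mod 4" "t div 4"] by simp_all
  moreover have "x = 32 * (t div 4) + 8 * (t mod 4)"
    using x div_mult_mod_eq [of t 4] by linarith
  ultimately show
    "x \<in> (*) 32 ` range moser_de_bruijn \<union> (\<lambda>q. 32 * q + 8) ` range moser_de_bruijn"
    using q by (cases "t mod 4") auto
next
  fix x
  assume
    "x \<in> (*) 32 ` range moser_de_bruijn \<union> (\<lambda>q. 32 * q + 8) ` range moser_de_bruijn"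
  then show "x \<in> (*) 8 ` range moser_de_bruijn"
  proof
    assume "x \<in> (*) 32 ` range moser_de_bruijn"
    then obtain q where q: "q \<in> range moser_de_bruijn" and x: "x = 8 * (4 * q + 0)"
      by auto
    have "4 * q + 0 \<in> range moser_de_bruijn"
      using q four_mult_add_in_range_moser_de_bruijn [of 0 q] by simp
    then show ?thesis
      unfolding x by (rule imageI)
  next
    assume "x \<in> (\<lambda>q. 32 * q + 8) ` range moser_de_bruijn"
    then obtain q where q: "q \<in> range moser_de_bruijn" and x: "x = 8 * (4 * q + 1)"
      by force
    have "4 * q + 1 \<in> range moser_de_bruijn"
      using q four_mult_add_in_range_moser_de_bruijn [of 1 q] by simp
    then show ?thesis
      unfolding x by (rule imageI)
  qed
qed

lemma Hseries_eq: "Hseries = (1 + fps_X ^ 8) * Hseries ^ 4"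
proof -
  have "Hseries ^ 4 = (Hseries ^ 2) ^ 2"
    by (simp flip: power_mult)
  also have "\<dots> = indicator_fps ((*) 2 ` (*) 2 ` (*) 8 ` range moser_de_bruijn)"
    by (simp only: Hseries_def indicator_fps_square)
  also have "(*) 2 ` (*) 2 ` (*) 8 ` range moser_de_bruijn = (*) 32 ` range moser_de_bruijn"
    by (simp add: image_image)
  finally have H4: "Hseries ^ 4 = indicator_fps ((*) 32 ` range moser_de_bruijn)" .
  have "fps_X ^ 8 * Hseries ^ 4 = indicator_fps ((\<lambda>q. 32 * q + 8) ` range moser_de_bruijn)"
    by (simp add: H4 fps_X_power_mult_indicator_fps image_image add.commute)
  then have "(1 + fps_X ^ 8) * Hseries ^ 4 =
      indicator_fps ((*) 32 ` range moser_de_bruijn) +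
      indicator_fps ((\<lambda>q. 32 * q + 8) ` range moser_de_bruijn)"
    by (simp add: distrib_right H4)
  also have "\<dots> = Hseries"
    unfolding Hseries_def eight_times_range_moser_de_bruijn
    by (rule indicator_fps_add_disjoint) (auto, presburger)
  finally show ?thesis ..
qed

lemma Hseries_cube: "Hseries ^ 3 * (1 + fps_X) ^ 8 = 1"
proof -
  have "fps_nth Hseries 0 = 1"
    by (simp add: Hseries_def image_iff exI [of _ 0])
  then have "Hseries \<noteq> 0"
    by auto
  moreover have "Hseries * 1 = Hseries * (Hseries ^ 3 * (1 + fps_X) ^ 8)"
    by (subst (1) Hseries_eq) (simp add: bit_fps_one_plus_X_power_8 algebra_simps power_numeral_reduce)
  ultimately show ?thesis
    by simp
qed

definition tmG_support :: "nat set" where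
  "tmG_support = {n. 1 \<le> n \<and> (n + 1) mod 8 < 4 \<and> (n + 1) div 8 \<in> range moser_de_bruijn}"

lemma fps_X_mult_indicator_tmG_support:
  "fps_X * indicator_fps tmG_support = Hseries * (1 + fps_X) ^ 3 + (1 + fps_X)"
proof -
  define U where "U = {x. x mod 8 < 4 \<and> x div 8 \<in> range moser_de_bruijn}"
  have "Hseries * (1 + fps_X) ^ 3 = indicator_fps U"
    unfolding Hseries_def U_def bit_fps_one_plus_X_cube by (rule indicator_fps_mult_sum_X_powers) simp
  moreover have "1 + fps_X = indicator_fps {0, 1}"
    using indicator_fps_add_disjoint [of "{0}" "{1}"] by (simp add: indicator_fps_singleton insert_commute)
  moreover have "{0, 1} \<subseteq> U"
    by (auto simp: U_def image_iff intro: exI [of _ 0])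
  ultimately have "Hseries * (1 + fps_X) ^ 3 + (1 + fps_X) = indicator_fps (U - {0, 1})"
    by (simp add: indicator_fps_add Diff_eq_empty_iff [THEN iffD2])
  also have "U - {0, 1} = Suc ` tmG_support"
  proof (intro equalityI subsetI)
    fix x
    assume "x \<in> U - {0, 1}"
    then have "x - 1 \<in> tmG_support" and "x = Suc (x - 1)"
      by (auto simp: U_def tmG_support_def)
    then show "x \<in> Suc ` tmG_support"
      by (metis imageI)
  qed (auto simp: U_def tmG_support_def)
  finally show ?thesis
    using fps_X_power_mult_indicator_fps [of 1 tmG_support] by simp
qed

lemma tmG_eq: "tmG = indicator_fps tmG_support"
proof -
  let ?G = "indicator_fps tmG_support"
  have G0: "fps_nth ?G 0 = 0"
    by (simp add: tmG_support_def)
  let ?Y = "tmF oo ?G"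
  have X: "fps_X * (1 + ?G) ^ 2 = (1 + ?G) ^ 3 * fps_X ^ 2 + ?G"
    by (rule char_2_cubic [OF _ _ fps_X_mult_indicator_tmG_support Hseries_cube]) simp_all
  have Y: "?Y * (1 + ?G) ^ 2 = (1 + ?G) ^ 3 * ?Y ^ 2 + ?G"
    using arg_cong [OF tmF_functional_equation, of "\<lambda>f. f oo ?G"] G0
    by (simp add: fps_compose_mult_distrib fps_compose_add_distrib fps_compose_power [symmetric])
  \<comment> \<open>Both solve Z (1 + G)^2 = (1 + G)^3 Z^2 + G, and the cofactor below has constant term 1.\<close>
  have "(?Y - fps_X) * ((1 + ?G) ^ 2 - (1 + ?G) ^ 3 * (?Y + fps_X)) =
      (?Y * (1 + ?G) ^ 2 - ((1 + ?G) ^ 3 * ?Y ^ 2 + ?G)) -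
      (fps_X * (1 + ?G) ^ 2 - ((1 + ?G) ^ 3 * fps_X ^ 2 + ?G))"
    by algebra
  then have product: "(?Y - fps_X) * ((1 + ?G) ^ 2 - (1 + ?G) ^ 3 * (?Y + fps_X)) = 0"
    by (simp only: X Y diff_self diff_zero)
  have "fps_nth ((1 + ?G) ^ 2 - (1 + ?G) ^ 3 * (?Y + fps_X)) 0 = 1"
    using G0 by (simp add: tmF_nth fps_nth_power_0)
  then have "(1 + ?G) ^ 2 - (1 + ?G) ^ 3 * (?Y + fps_X) \<noteq> 0"
    by (metis fps_zero_nth zero_neq_one)
  with product have "?Y = fps_X"
    by simp
  then show ?thesis
    unfolding tmG_def using G0
    by (intro fps_inv_unique) (simp_all add: tmF_nth thue_morse_double_plus_1 [of 0, simplified])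
qed

section \<open>The sequences d and z\<close>

text \<open>The zeros of c form the blocks {4k - 1, ..., 4k + 2} with k in zero_blocks.\<close>

definition zero_blocks :: "nat set" where
  "zero_blocks = - range (\<lambda>i. 2 * moser_de_bruijn i)"

lemma zero_notin_zero_blocks: "0 \<notin> zero_blocks"
  by (auto simp: zero_blocks_def image_iff intro: exI [of _ 0])

lemma infinite_zero_blocks: "infinite zero_blocks"
  unfolding infinite_nat_iff_unbounded
proof
  fix m
  have "2 * m + 1 \<in> zero_blocks"
    by (auto simp: zero_blocks_def) presburger
  then show "\<exists>n>m. n \<in> zero_blocks"
    by (intro exI [of _ "2 * m + 1"]) simp
qed

lemma dseq_support_eq: "{m. m \<ge> 1 \<and> cseq m = 0} = {m. (m + 1) div 4 \<in> zero_blocks}"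
proof -
  have doubled:
    "x \<in> range (\<lambda>i. 2 * moser_de_bruijn i) \<longleftrightarrow> even x \<and> x div 2 \<in> range moser_de_bruijn" for x
    by (auto elim!: evenE)
  have "m \<ge> 1 \<and> cseq m = 0 \<longleftrightarrow> (m + 1) div 4 \<in> zero_blocks" for m
  proof (cases "m = 0")
    case False
    have "even ((m + 1) div 4) \<longleftrightarrow> (m + 1) mod 8 < 4"
      by presburger
    moreover have "(m + 1) div 4 div 2 = (m + 1) div 8"
      by (simp add: div_mult2_eq)
    ultimately show ?thesis
      using False by (simp add: cseq_def tmG_eq tmG_support_def zero_blocks_def doubled)
  qed (simp add: zero_notin_zero_blocks)
  then show ?thesis
    by blast
qed

lemma dseq_mult_4: "dseq (4 * n) = 4 * enumerate zero_blocks n - 1"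
proof -
  let ?k = "enumerate zero_blocks"
  define e where "e j = 4 * ?k (j div 4) + j mod 4 - 1" for j
  have k_mono: "strict_mono ?k"
    by (rule strict_mono_enumerate [OF infinite_zero_blocks])
  have k_pos: "1 \<le> ?k a" for a
    using enumerate_in_set [OF infinite_zero_blocks, of a] zero_notin_zero_blocks
    by (cases "?k a") auto
  have "e j < e (Suc j)" for j
  proof (cases "j mod 4 = 3")
    case True
    then have "Suc j div 4 = Suc (j div 4)" and "Suc j mod 4 = 0"
      by presburger+
    moreover have "?k (j div 4) < ?k (Suc (j div 4))"
      using k_mono by (simp add: strict_mono_def)
    ultimately show ?thesis
      using True by (simp add: e_def)
  next
    case False
    then have "Suc j div 4 = j div 4" and "Suc j mod 4 = Suc (j mod 4)"
      by presburger+
    then show ?thesis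
      using k_pos [of "j div 4"] by (simp add: e_def)
  qed
  then have e_mono: "strict_mono e"
    by (simp add: strict_mono_Suc_iff)
  have range_e: "range e = {m. (m + 1) div 4 \<in> zero_blocks}"
  proof (intro equalityI subsetI)
    fix m
    assume "m \<in> range e"
    then obtain j where "m = e j"
      by blast
    then have "m + 1 = 4 * ?k (j div 4) + j mod 4"
      using k_pos [of "j div 4"] by (simp add: e_def)
    then have "(m + 1) div 4 = ?k (j div 4)"
      by simp
    then show "m \<in> {m. (m + 1) div 4 \<in> zero_blocks}"
      by (simp add: enumerate_in_set infinite_zero_blocks)
  next
    fix m
    assume "m \<in> {m. (m + 1) div 4 \<in> zero_blocks}"
    then obtain a where a: "(m + 1) div 4 = ?k a"
      using range_enumerate [OF infinite_zero_blocks] by blast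
    have "e (4 * a + (m + 1) mod 4) = m"
      by (simp add: e_def flip: a)
    then show "m \<in> range e"
      by (metis rangeI)
  qed
  have "dseq (4 * n) = enumerate (range e) (4 * n)"
    unfolding dseq_def dseq_support_eq range_e ..
  also have "\<dots> = e (4 * n)"
    by (rule enumerate_range_strict_mono [OF e_mono])
  finally show ?thesis
    by (simp add: e_def)
qed

lemma card_zero_blocks_less:
  "card {y \<in> zero_blocks. y < k} + card {i. 2 * moser_de_bruijn i < k} = k"
proof -
  have "inj moser_de_bruijn"
    using strict_mono_imp_inj_on [OF strict_mono_moser_de_bruijn] .
  then have "inj (\<lambda>i. 2 * moser_de_bruijn i)"
    by (simp add: inj_def)
  then have "card ((\<lambda>i. 2 * moser_de_bruijn i) ` {i. 2 * moser_de_bruijn i < k}) =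
      card {i. 2 * moser_de_bruijn i < k}"
    by (simp add: card_image inj_on_subset)
  moreover have "{y. y < k \<and> y \<notin> zero_blocks} =
      (\<lambda>i. 2 * moser_de_bruijn i) ` {i. 2 * moser_de_bruijn i < k}"
    by (auto simp: zero_blocks_def)
  ultimately show ?thesis
    using card_less_add_card_less_notin [of zero_blocks k] by simp
qed

lemma enumerate_zero_blocks:
  "enumerate zero_blocks n = n + card {i. 2 * moser_de_bruijn i < enumerate zero_blocks n}"
  using card_zero_blocks_less [of "enumerate zero_blocks n"] card_less_enumerate [OF infinite_zero_blocks]
  by simp

lemma zseq_eq_parity:
  "zseq n = int (card {i. 2 * moser_de_bruijn i < enumerate zero_blocks n} mod 2)"
proof -
  let ?k = "enumerate zero_blocks n"
  let ?c = "card {i. 2 * moser_de_bruijn i < ?k}"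
  have "1 \<le> ?k"
    using enumerate_in_set [OF infinite_zero_blocks, of n] zero_notin_zero_blocks
    by (cases ?k) auto
  then have "(int (dseq (4 * n)) + 1) div 4 = int ?k"
    by (simp add: dseq_mult_4 of_nat_diff)
  moreover have "int ?k - int n = int ?c"
    using enumerate_zero_blocks [of n] by linarith
  ultimately show ?thesis
    by (simp add: zseq_def zmod_int)
qed

lemma card_doubled_moser_de_bruijn_less:
  "card {j. 2 * moser_de_bruijn j < 8 * moser_de_bruijn i + 1} = 2 * i + 1"
proof -
  have "2 * moser_de_bruijn j < 8 * moser_de_bruijn i + 1 \<longleftrightarrow> j < 2 * i + 1" for j
  proof -
    have "2 * moser_de_bruijn j < 8 * moser_de_bruijn i + 1 \<longleftrightarrow>
        moser_de_bruijn j \<le> moser_de_bruijn (2 * i)"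
      by simp presburger
    also have "\<dots> \<longleftrightarrow> j \<le> 2 * i"
      by (rule strict_mono_less_eq [OF strict_mono_moser_de_bruijn])
    finally show ?thesis
      by (simp add: less_Suc_eq_le)
  qed
  then have "{j. 2 * moser_de_bruijn j < 8 * moser_de_bruijn i + 1} = {..<2 * i + 1}"
    by auto
  then show ?thesis
    by simp
qed

lemma odd_card_doubled_moser_de_bruijn_less:
  assumes "k \<in> zero_blocks" and "odd (card {j. 2 * moser_de_bruijn j < k})"
  obtains i where "k = 8 * moser_de_bruijn i + 1"
proof -
  obtain i where c: "card {j. 2 * moser_de_bruijn j < k} = 2 * i + 1"
    using assms(2) by (rule oddE)
  have "strict_mono (\<lambda>j. 2 * moser_de_bruijn j)"
    using strict_mono_moser_de_bruijn by (simp add: strict_mono_def)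
  then have "{j. 2 * moser_de_bruijn j < k} = {..<2 * i + 1}"
    unfolding c [symmetric] by (rule strict_mono_less_eq_lessThan)
  then have less_iff: "2 * moser_de_bruijn j < k \<longleftrightarrow> j < 2 * i + 1" for j
    by (metis lessThan_iff mem_Collect_eq)
  have "2 * moser_de_bruijn (2 * i) < k" and "\<not> 2 * moser_de_bruijn (Suc (2 * i)) < k"
    using less_iff [of "2 * i"] less_iff [of "Suc (2 * i)"] by simp_all
  moreover have "2 * moser_de_bruijn (Suc (2 * i)) \<notin> zero_blocks"
    unfolding zero_blocks_def by (blast intro: rangeI)
  then have "k \<noteq> 2 * moser_de_bruijn (Suc (2 * i))"
    using assms(1) by blast
  ultimately have "k = 8 * moser_de_bruijn i + 1"
    by simp
  then show ?thesis
    by (rule that)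
qed

definition zseq_ones :: "nat \<Rightarrow> nat" where
  "zseq_ones i = 8 * moser_de_bruijn i - 2 * i"

lemma zseq_eq_indicator: "zseq n = (if n \<in> range zseq_ones then 1 else 0)"
proof -
  let ?k = "enumerate zero_blocks n"
  let ?c = "card {i. 2 * moser_de_bruijn i < ?k}"
  show ?thesis
  proof (cases "odd ?c")
    case True
    obtain i where "?k = 8 * moser_de_bruijn i + 1"
      using enumerate_in_set [OF infinite_zero_blocks, of n] True
      by (rule odd_card_doubled_moser_de_bruijn_less)
    then have "n = zseq_ones i"
      using enumerate_zero_blocks [of n] card_doubled_moser_de_bruijn_less [of i]
      by (simp add: zseq_ones_def)
    then show ?thesis
      using True by (simp add: zseq_eq_parity odd_iff_mod_2_eq_one)
  next
    case False
    have "n \<notin> range zseq_ones"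
    proof
      assume "n \<in> range zseq_ones"
      then obtain i where n: "n = zseq_ones i"
        by blast
      have "8 * moser_de_bruijn i + 1 \<in> zero_blocks"
        by (auto simp: zero_blocks_def) presburger
      moreover have "card {y \<in> zero_blocks. y < 8 * moser_de_bruijn i + 1} = n"
        using card_zero_blocks_less [of "8 * moser_de_bruijn i + 1"] card_doubled_moser_de_bruijn_less [of i]
        by (simp add: n zseq_ones_def)
      ultimately have "?k = 8 * moser_de_bruijn i + 1"
        using enumerate_card_less [OF infinite_zero_blocks] by metis
      then show False
        using False card_doubled_moser_de_bruijn_less [of i] by simp
    qed
    then show ?thesis
      using False by (simp add: zseq_eq_parity even_iff_mod_2_eq_zero)
  qed
qed

lemma zseq_ones_add: "zseq_ones i + 2 * i = 8 * moser_de_bruijn i"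
  using strict_mono_imp_increasing [OF strict_mono_moser_de_bruijn, of i]
  by (simp add: zseq_ones_def)

lemma strict_mono_zseq_ones: "strict_mono zseq_ones"
proof -
  have "zseq_ones i < zseq_ones (Suc i)" for i
    using moser_de_bruijn_less_Suc [of i] zseq_ones_add [of i] zseq_ones_add [of "Suc i"]
    by presburger
  then show ?thesis
    by (simp add: strict_mono_Suc_iff)
qed

lemma zseq_ones_power_of_4: "zseq_ones (4 ^ p) = 2 ^ (2 * p + 1) * (4 ^ (p + 1) - 1)"
proof -
  have four: "(4 :: nat) ^ p = 2 ^ (2 * p)"
    by (simp add: power_mult)
  obtain e where e: "4 ^ p = Suc e"
    using not0_implies_Suc [of "4 ^ p"] by auto
  have "moser_de_bruijn (4 ^ p) = moser_de_bruijn (2 ^ (2 * p))"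
    by (simp only: four)
  also have "\<dots> = 4 ^ p * 4 ^ p"
    by (simp only: moser_de_bruijn_power_of_2) (simp only: mult_2 power_add)
  finally have "moser_de_bruijn (4 ^ p) = Suc e * Suc e"
    by (simp only: e)
  moreover have "(2 :: nat) ^ (2 * p + 1) = 2 * Suc e" and "(4 :: nat) ^ (p + 1) - 1 = 4 * e + 3"
    by (simp_all add: e flip: four)
  ultimately show ?thesis
    by (simp add: zseq_ones_def e algebra_simps)
qed

lemma not_in_range_zseq_ones:
  assumes "p < q"
  shows "2 ^ (2 * q + 1) * (4 ^ (p + 1) - 1) \<notin> range zseq_ones"
proof -
  define P Q R :: nat where "P = 2 ^ (p + q)" and "Q = 4 ^ (p + q)" and "R = 4 ^ q"
  define a where "a = P - 1"
  have P: "Suc a = P"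
    by (simp add: a_def P_def)
  have four: "(4 :: nat) ^ k = 2 ^ (2 * k)" for k
    by (simp add: power_mult)
  have N: "2 ^ (2 * q + 1) * (4 ^ (p + 1) - 1) + 2 * R = 8 * Q"
  proof -
    obtain e where e: "4 ^ p = Suc e"
      using not0_implies_Suc [of "4 ^ p"] by auto
    have "(2 :: nat) ^ (2 * q + 1) = 2 * R"
      by (simp add: R_def power_mult)
    moreover have "(4 :: nat) ^ (p + 1) - 1 = 4 * e + 3"
      by (simp add: e)
    moreover have "Suc e * R = Q"
      by (simp add: R_def Q_def power_add flip: e)
    ultimately show ?thesis
      by (simp add: algebra_simps)
  qed
  have upper: "zseq_ones (Suc a) + 2 * P = 8 * Q"
  proof -
    have "moser_de_bruijn P = Q"
      using moser_de_bruijn_power_of_2 [of "p + q"] by (simp add: P_def Q_def)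
    moreover have "P \<le> Q"
      using strict_mono_imp_increasing [OF strict_mono_moser_de_bruijn, of P] calculation by simp
    ultimately show ?thesis
      using zseq_ones_add [of "Suc a"] by (simp add: P)
  qed
  have lower: "3 * moser_de_bruijn a + 1 = Q"
    using moser_de_bruijn_power_of_2_minus_1 [of "p + q"] by (simp add: a_def P_def Q_def)
  have "P < R"
    using assms by (simp add: P_def R_def four)
  moreover have "R \<le> Q"
    by (simp add: R_def Q_def)
  moreover have "zseq_ones a \<le> 8 * moser_de_bruijn a"
    using zseq_ones_add [of a] by linarith
  ultimately have "zseq_ones a < 2 ^ (2 * q + 1) * (4 ^ (p + 1) - 1)"
    and "2 ^ (2 * q + 1) * (4 ^ (p + 1) - 1) < zseq_ones (Suc a)"
    using N upper lower by linarith+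
  then show ?thesis
    by (rule strict_mono_gap_not_in_range [OF strict_mono_zseq_ones])
qed

theorem mainTheorem14:
  shows "\<not> automatic 2 zseq"
proof
  assume "automatic 2 zseq"
  then have finite_kernel: "finite (kernel 2 zseq)"
    by (simp add: automatic_def)
  define u where "u p = (\<lambda>n. zseq (2 ^ (2 * p + 1) * n))" for p
  have "u p \<in> kernel 2 zseq" for p
    unfolding u_def kernel_def by (intro CollectI exI [of _ "2 * p + 1"] exI [of _ 0]) simp
  then have kernel: "range u \<subseteq> kernel 2 zseq"
    by blast
  have "u p \<noteq> u q" if "p < q" for p q
  proof -
    have "2 ^ (2 * p + 1) * (4 ^ (p + 1) - 1) \<in> range zseq_ones"
      by (metis zseq_ones_power_of_4 rangeI)
    then have "u p (4 ^ (p + 1) - 1) = 1"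
      by (simp add: u_def zseq_eq_indicator)
    moreover have "u q (4 ^ (p + 1) - 1) = 0"
      using not_in_range_zseq_ones [OF that] by (simp add: u_def zseq_eq_indicator)
    ultimately show ?thesis
      by auto
  qed
  then have "inj u"
    by (metis injI linorder_neqE_nat)
  then have "infinite (range u)"
    by (rule range_inj_infinite)
  with finite_kernel kernel show False
    using finite_subset by blast
qed

end
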